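(* Let $n\ge1$, and let either (constant case) $s\in(0,1)$, $p\in(1,\infty)$ with $p>1/(1-s)$ if $p<2$, and $K:B_2\times\mathbb{R}^n\to[0,\infty)$ measurable with $K(x,y)=K(x,-y)$, $\lambda|y|^{-n-sp}\le K(x,y)\le\Lambda|y|^{-n-sp}$ for $x,y\in B_2$, and $0\le K(x,y)\le M|y|^{-n-\gamma}$ for $x\in B_2$, $y\in\mathbb{R}^n\setminus B_{1/4}$ (with constants $\Lambda\ge\lambda>0$, $M,\gamma>0$); or (variable case) the same with $s,p$ replaced by functions $s(x),p(x)$ on $B_2$ satisfying $0<s_0<s(x)<s_1<1$, $1<p_0<p(x)<p_1<\infty$, and $p(x)(1-s(x))-1>\tau>0$ whenever $p(x)<2$, and with $|y|^{-n-sp}$ replaced by $|y|^{-n-s(x)p(x)}$. Let $L$ be the corresponding operator $$Lu(x)=\operatorname{PV}\int_{\mathbb{R}^n}|u(x)-u(x+y)|^{p(x)-2}(u(x)-u(x+y))K(x,y)\,dy$$ (with $p(x)\equiv p$ in the constant case). Let $C\in\mathbb{R}$ and suppose $u\in L^\infty(\mathbb{R}^n)$ satisfies $Lu\le C$ in $B_1$ in the viscosity sense. Suppose $x_0\in B_1$, $r>0$ with $B_r(x_0)\subset B_1$, and $\phi\in C^2(B_r(x_0))$ satisfies $\phi(x_0)=u(x_0)$ and $\phi\ge u$ in $B_r(x_0)$. Then $Lu$ is defined pointwise at $x_0$, i.e. the function $y\mapsto\delta(u,x_0,y)K(x_0,y)$ is integrable over $\mathbb{R}^n$, and $Lu(x_0)=\int_{\mathbb{R}^n}\delta(u,x_0,y)K(x_0,y)\,dy\le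 C$.
   Context: $B_r$ denotes the open ball of radius $r$ centred at the origin, $B_r(x_0)$ the ball centred at $x_0$. $\operatorname{PV}\int=\lim_{r\to0}\int_{\mathbb{R}^n\setminus B_r}$; $|t|^{q-2}t:=0$ at $t=0$. For a function $v$, $\delta(v,x,y)=\tfrac12|v(x)-v(x+y)|^{p(x)-2}(v(x)-v(x+y))+\tfrac12|v(x)-v(x-y)|^{p(x)-2}(v(x)-v(x-y))$. Viscosity subsolution: a function $u\in L^\infty(\mathbb{R}^n)$ upper semicontinuous in an open set $D$ is a viscosity subsolution of $Lu\le C$ in $D$ if whenever $x_0\in D$, $r>0$, $\phi\in C^2(B_r(x_0))$ with $B_r(x_0)\subset D$, $\phi(x_0)=u(x_0)$ and $\phi\ge u$ in $B_r(x_0)$, then $L\phi_r(x_0)\le C$, where $\phi_r=\phi$ in $B_r(x_0)$ and $\phi_r=u$ in $\mathbb{R}^n\setminus B_r(x_0)$. *)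

theory Defs
  imports "HOL-Analysis.Analysis"
begin

definition spow :: "real \<Rightarrow> real \<Rightarrow> real" where
  "spow q t = (if t = 0 then 0 else \<bar>t\<bar> powr (q - 2) * t)"

definition usc_on :: "'a::topological_space set \<Rightarrow> ('a \<Rightarrow> real) \<Rightarrow> bool" where
  "usc_on D u \<longleftrightarrow> (\<forall>x\<in>D. \<forall>e>0. \<forall>\<^sub>F y in at x. u y < u x + e)"

definition C2_on :: "'a::euclidean_space set \<Rightarrow> ('a \<Rightarrow> real) \<Rightarrow> bool" where
  "C2_on S \<phi> \<longleftrightarrow> (\<exists>D :: 'a \<Rightarrow> ('a \<Rightarrow>\<^sub>L real). \<exists>D2 :: 'a \<Rightarrow> ('a \<Rightarrow>\<^sub>L ('a \<Rightarrow>\<^sub>L real)).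
      (\<forall>x\<in>S. (\<phi> has_derivative blinfun_apply (D x)) (at x)) \<and>
      (\<forall>x\<in>S. (D has_derivative blinfun_apply (D2 x)) (at x)) \<and>
      continuous_on S D2)"

definition Lintegrand :: "('a::euclidean_space \<Rightarrow> real) \<Rightarrow> ('a \<Rightarrow> 'a \<Rightarrow> real) \<Rightarrow> ('a \<Rightarrow> real)
    \<Rightarrow> 'a \<Rightarrow> 'a \<Rightarrow> real" where
  "Lintegrand p K v x y = spow (p x) (v x - v (x + y)) * K x y"

definition PV_has_value :: "('a::euclidean_space \<Rightarrow> real) \<Rightarrow> ('a \<Rightarrow> 'a \<Rightarrow> real) \<Rightarrow> ('a \<Rightarrow> real)
    \<Rightarrow> 'a \<Rightarrow> real \<Rightarrow> bool" where
  "PV_has_value p K v x l \<longleftrightarrow>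
     (\<forall>\<^sub>F \<rho> in at_right 0. set_integrable lborel (- ball 0 \<rho>) (Lintegrand p K v x)) \<and>
     ((\<lambda>\<rho>. set_lebesgue_integral lborel (- ball 0 \<rho>) (Lintegrand p K v x)) \<longlongrightarrow> l) (at_right 0)"

definition delta :: "('a::euclidean_space \<Rightarrow> real) \<Rightarrow> ('a \<Rightarrow> real) \<Rightarrow> 'a \<Rightarrow> 'a \<Rightarrow> real" where
  "delta p v x y = spow (p x) (v x - v (x + y)) / 2 + spow (p x) (v x - v (x - y)) / 2"

definition visc_sub :: "('a::euclidean_space \<Rightarrow> real) \<Rightarrow> ('a \<Rightarrow> 'a \<Rightarrow> real) \<Rightarrow> ('a \<Rightarrow> real)
    \<Rightarrow> real \<Rightarrow> 'a set \<Rightarrow> bool" where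
  "visc_sub p K u C D \<longleftrightarrow>
     u \<in> borel_measurable lborel \<and> bounded (range u) \<and> usc_on D u \<and>
     (\<forall>x0\<in>D. \<forall>r>0. \<forall>\<phi>. ball x0 r \<subseteq> D \<and> C2_on (ball x0 r) \<phi> \<and> \<phi> x0 = u x0 \<and>
        (\<forall>x\<in>ball x0 r. \<phi> x \<ge> u x) \<longrightarrow>
        (\<exists>l. l \<le> C \<and> PV_has_value p K (\<lambda>z. if z \<in> ball x0 r then \<phi> z else u z) x0 l))"

definition admissible_sp :: "('a::euclidean_space \<Rightarrow> real) \<Rightarrow> ('a \<Rightarrow> real) \<Rightarrow> bool" where
  "admissible_sp s p \<longleftrightarrow>
    (\<exists>s' p'. s = (\<lambda>_. s') \<and> p = (\<lambda>_. p') \<and> 0 < s' \<and> s' < 1 \<and> 1 < p' \<and>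
        (p' < 2 \<longrightarrow> p' > 1 / (1 - s'))) \<or>
    (\<exists>s0 s1 p0 p1 \<tau>. 0 < s0 \<and> s1 < 1 \<and> 1 < p0 \<and> \<tau> > 0 \<and>
        (\<forall>x\<in>ball 0 2. s0 < s x \<and> s x < s1 \<and> p0 < p x \<and> p x < p1 \<and>
           (p x < 2 \<longrightarrow> p x * (1 - s x) - 1 > \<tau>)))"

definition admissible_kernel :: "('a::euclidean_space \<Rightarrow> real) \<Rightarrow> ('a \<Rightarrow> real) \<Rightarrow> ('a \<Rightarrow> 'a \<Rightarrow> real)
    \<Rightarrow> real \<Rightarrow> real \<Rightarrow> real \<Rightarrow> real \<Rightarrow> bool" where
  "admissible_kernel s p K lam Lam M \<gamma> \<longleftrightarrow>
     0 < lam \<and> lam \<le> Lam \<and> 0 < M \<and> 0 < \<gamma> \<and>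
     (\<lambda>z. if fst z \<in> ball 0 2 then K (fst z) (snd z) else 0) \<in> borel_measurable (lborel \<Otimes>\<^sub>M lborel) \<and>
     (\<forall>x\<in>ball 0 2. \<forall>y. K x y \<ge> 0 \<and> K x y = K x (- y)) \<and>
     (\<forall>x\<in>ball 0 2. \<forall>y\<in>ball 0 2.
        lam * norm y powr (- real DIM('a) - s x * p x) \<le> K x y \<and>
        K x y \<le> Lam * norm y powr (- real DIM('a) - s x * p x)) \<and>
     (\<forall>x\<in>ball 0 2. \<forall>y. y \<notin> ball 0 (1/4) \<longrightarrow> K x y \<le> M * norm y powr (- real DIM('a) - \<gamma>))"

end

theory Submission
  imports Defs
begin

text \<open>
  Let \<open>\<phi>\<^sub>\<rho>\<close> be \<open>\<phi>\<close> on \<open>ball x0 \<rho>\<close> and \<open>u\<close> elsewhere. Since \<open>K x0\<close> is even, the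
  principal value in the viscosity inequality for \<open>\<phi>\<^sub>\<rho>\<close> is the absolutely convergent
  integral of \<open>delta p \<phi>\<^sub>\<rho> x0 y * K x0 y\<close>. Near \<open>y = 0\<close> a second order Taylor bound gives
  \<open>\<bar>delta p \<phi> x0 y\<bar> \<le> A * norm y powr \<theta>\<close> with \<open>\<theta> = 2p - 2\<close> for \<open>p \<le> 2\<close> and \<open>\<theta> = p\<close> for
  \<open>p > 2\<close>, which beats the kernel singularity \<open>norm y powr (- n - s p)\<close> precisely because
  \<open>s p < \<theta>\<close> (for \<open>p < 2\<close> this is the hypothesis \<open>p (1 - s) > 1\<close>); away from \<open>0\<close>,
  boundedness of \<open>u\<close> and the tail bound on \<open>K\<close> suffice. As \<open>\<phi> \<ge> u\<close> with equality at
  \<open>x0\<close>, the integrands increase to \<open>delta p u x0 y * K x0 y\<close> as \<open>\<rho> \<down> 0\<close>, so monotone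
  convergence yields integrability and the bound \<open>C\<close>.
\<close>

section \<open>Signed powers\<close>

lemma spow_nonneg: "0 \<le> t \<Longrightarrow> spow q t = t powr (q - 1)"
  by (cases "t = 0") (simp_all add: spow_def powr_diff power2_eq_square)

lemma spow_minus: "spow q (- t) = - spow q t"
  by (simp add: spow_def)

lemma spow_nonpos: "t \<le> 0 \<Longrightarrow> spow q t = - ((- t) powr (q - 1))"
  using spow_nonneg[of "- t" q] spow_minus[of q "- t"] by simp

lemma spow_zero [simp]: "spow q 0 = 0"
  by (simp add: spow_def)

lemma abs_spow: "\<bar>spow q t\<bar> = \<bar>t\<bar> powr (q - 1)"
  by (cases "0 \<le> t") (simp_all add: spow_nonneg spow_nonpos)

lemma borel_measurable_spow [measurable]: "spow q \<in> borel_measurable borel"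
  unfolding spow_def[abs_def] by measurable

lemma spow_mono:
  assumes "z \<le> x" "1 \<le> q"
  shows "spow q z \<le> spow q x"
proof (cases "0 \<le> z")
  case z: False
  show ?thesis
  proof (cases "0 \<le> x")
    case True
    have "spow q z \<le> 0" "0 \<le> spow q x" using z True by (simp_all add: spow_nonpos spow_nonneg)
    then show ?thesis by linarith
  qed (use z assms in \<open>simp add: spow_nonpos powr_mono2\<close>)
qed (use assms in \<open>simp add: spow_nonneg powr_mono2\<close>)

lemma abs_spow_diff_le:
  assumes "\<bar>a\<bar> \<le> N" "\<bar>b\<bar> \<le> N" "1 \<le> q"
  shows "\<bar>spow q (a - b)\<bar> \<le> (2 * N) powr (q - 1)"
  unfolding abs_spow using assms by (intro powr_mono2) auto

lemma powr_add_le: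
  fixes a b q :: real
  assumes "0 \<le> a" "0 \<le> b" "0 \<le> q" "q \<le> 1"
  shows "(a + b) powr q \<le> a powr q + b powr q"
proof (cases "a + b = 0")
  case False
  then have ab: "0 < a + b" using assms by auto
  have "a / (a + b) \<le> (a / (a + b)) powr q" "b / (a + b) \<le> (b / (a + b)) powr q"
    using assms ab powr_mono'[of q 1] by (auto simp: field_simps)
  moreover have "a / (a + b) + b / (a + b) = 1" using ab by (simp add: add_divide_distrib[symmetric])
  ultimately have "(a + b) powr q * 1 \<le> (a + b) powr q * ((a / (a + b)) powr q + (b / (a + b)) powr q)"
    by (intro mult_left_mono) auto
  also have "\<dots> = a powr q + b powr q"
    using ab assms by (simp add: distrib_left powr_divide)
  finally show ?thesis by simp
qed (use assms in auto)

lemma spow_holder: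
  assumes "1 < q" "q \<le> 2"
  shows "\<bar>spow q x - spow q z\<bar> \<le> 2 * \<bar>x - z\<bar> powr (q - 1)"
proof -
  have a: "0 \<le> q - 1" "q - 1 \<le> 1" using assms by simp_all
  have le: "spow q x - spow q z \<le> 2 * (x - z) powr (q - 1)" if "z \<le> x" for x z
  proof -
    consider "0 \<le> z" | "x \<le> 0" | "z < 0" "0 < x" by linarith
    then show ?thesis
    proof cases
      case 1
      then have "x powr (q - 1) \<le> z powr (q - 1) + (x - z) powr (q - 1)"
        using powr_add_le[OF _ _ a, of z "x - z"] that by simp
      then have "spow q x - spow q z \<le> (x - z) powr (q - 1)"
        using 1 that by (simp add: spow_nonneg)
      then show ?thesis using powr_ge_zero[of "x - z" "q - 1"] by linarith
    next
      case 2
      then have "(- z) powr (q - 1) \<le> (- x) powr (q - 1) + (x - z) powr (q - 1)"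
        using powr_add_le[OF _ _ a, of "- x" "x - z"] that by simp
      then have "spow q x - spow q z \<le> (x - z) powr (q - 1)"
        using 2 that by (simp add: spow_nonpos)
      then show ?thesis using powr_ge_zero[of "x - z" "q - 1"] by linarith
    next
      case 3
      then have "x powr (q - 1) \<le> (x - z) powr (q - 1)" "(- z) powr (q - 1) \<le> (x - z) powr (q - 1)"
        using a by (simp_all add: powr_mono2)
      then show ?thesis using 3 by (simp add: spow_nonneg spow_nonpos)
    qed
  qed
  show ?thesis
    using le[of z x] le[of x z] spow_mono[of z x q] spow_mono[of x z q] assms
    by (cases "z \<le> x") (simp_all add: abs_minus_commute)
qed

lemma powr_diff_le:
  fixes a x z :: real
  assumes "0 < z" "z \<le> x" "1 \<le> a"
  shows "x powr a - z powr a \<le> a * x powr (a - 1) * (x - z)"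
proof (cases "z = x")
  case False
  then have zx: "z < x" using assms by simp
  have "((\<lambda>t. t powr a) has_real_derivative a * t powr (a - 1)) (at t)"
    if "z \<le> t" "t \<le> x" for t
    using that assms by (intro has_real_derivative_powr) auto
  from MVT2[OF zx this] obtain \<xi> where \<xi>: "z < \<xi>" "\<xi> < x"
    "x powr a - z powr a = (x - z) * (a * \<xi> powr (a - 1))"
    by blast
  have "\<xi> powr (a - 1) \<le> x powr (a - 1)"
    using \<xi> assms by (intro powr_mono2) auto
  then have "(x - z) * (a * \<xi> powr (a - 1)) \<le> (x - z) * (a * x powr (a - 1))"
    using zx assms by (intro mult_left_mono) auto
  then show ?thesis using \<xi> by (simp add: mult_ac)
qed simp

lemma powr_le_mult_powr:
  fixes a x y :: real
  assumes "0 \<le> x" "x \<le> y" "1 \<le> a"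
  shows "x powr a \<le> x * y powr (a - 1)"
proof (cases "x = 0")
  case False
  then have "x powr a = x * x powr (a - 1)" using assms by (simp add: powr_mult_base)
  also have "\<dots> \<le> x * y powr (a - 1)" using assms by (intro mult_left_mono powr_mono2) auto
  finally show ?thesis .
qed simp

lemma spow_lipschitz:
  assumes "2 \<le> q"
  shows "\<bar>spow q x - spow q z\<bar> \<le> (q - 1) * (\<bar>x\<bar> + \<bar>z\<bar>) powr (q - 2) * \<bar>x - z\<bar>"
proof -
  define m where "m x z = (\<bar>x\<bar> + \<bar>z\<bar>) powr (q - 2)" for x z
  have le: "spow q x - spow q z \<le> (q - 1) * m x z * (x - z)" if "z \<le> x" for x z
  proof -
    consider "0 < z" | "x < 0" | "z \<le> 0" "0 \<le> x" by linarith
    then show ?thesis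
    proof cases
      case 1
      have "x powr (q - 1) - z powr (q - 1) \<le> (q - 1) * x powr (q - 2) * (x - z)"
        using powr_diff_le[OF 1 that, of "q - 1"] assms by simp
      also have "\<dots> \<le> (q - 1) * m x z * (x - z)"
        using 1 that assms by (intro mult_right_mono mult_left_mono) (auto simp: m_def intro: powr_mono2)
      finally show ?thesis using 1 that by (simp add: spow_nonneg)
    next
      case 2
      have "(- z) powr (q - 1) - (- x) powr (q - 1) \<le> (q - 1) * (- z) powr (q - 2) * (x - z)"
        using powr_diff_le[of "- x" "- z" "q - 1"] 2 that assms by simp
      also have "\<dots> \<le> (q - 1) * m x z * (x - z)"
        using 2 that assms by (intro mult_right_mono mult_left_mono) (auto simp: m_def intro: powr_mono2)
      finally show ?thesis using 2 that by (simp add: spow_nonpos)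
    next
      case 3
      have "x powr (q - 1) \<le> x * m x z" "(- z) powr (q - 1) \<le> (- z) * m x z"
        using 3 assms powr_le_mult_powr[of x "\<bar>x\<bar> + \<bar>z\<bar>" "q - 1"]
          powr_le_mult_powr[of "- z" "\<bar>x\<bar> + \<bar>z\<bar>" "q - 1"] by (simp_all add: m_def)
      moreover have "1 * ((x - z) * m x z) \<le> (q - 1) * ((x - z) * m x z)"
        using 3 assms by (intro mult_right_mono) (auto simp: m_def)
      ultimately show ?thesis using 3 by (simp add: spow_nonneg spow_nonpos algebra_simps)
    qed
  qed
  show ?thesis
  proof (cases "z \<le> x")
    case True
    then show ?thesis using le[OF True] spow_mono[OF True] assms by (simp add: m_def)
  next
    case False
    then have "x \<le> z" by simp
    then show ?thesis
      using le[OF \<open>x \<le> z\<close>] spow_mono[OF \<open>x \<le> z\<close>] assms by (simp add: m_def add.commute abs_minus_commute)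
  qed
qed

lemma spow_sum_bound:
  fixes a b q B L t :: real
  assumes q: "1 < q" and B: "0 \<le> B" and L: "0 \<le> L" and t: "0 < t"
    and a: "\<bar>a\<bar> \<le> B * t" and b: "\<bar>b\<bar> \<le> B * t" and ab: "\<bar>a + b\<bar> \<le> L * t\<^sup>2"
  shows "\<bar>spow q a + spow q b\<bar> \<le>
    (if q \<le> 2 then 2 * L powr (q - 1) else (q - 1) * (2 * B) powr (q - 2) * L) *
      t powr (if q \<le> 2 then 2 * q - 2 else q)"
proof -
  have sum: "spow q a + spow q b = spow q a - spow q (- b)" by (simp add: spow_minus)
  show ?thesis
  proof (cases "q \<le> 2")
    case True
    have "\<bar>spow q a - spow q (- b)\<bar> \<le> 2 * \<bar>a + b\<bar> powr (q - 1)"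
      using spow_holder[OF q True, of a "- b"] by simp
    also have "\<dots> \<le> 2 * (L * t\<^sup>2) powr (q - 1)"
      using ab q by (simp add: powr_mono2)
    also have "(t\<^sup>2) powr (q - 1) = t powr (2 * q - 2)"
      using t powr_powr[of t 2 "q - 1"] by (simp add: algebra_simps)
    then have "2 * (L * t\<^sup>2) powr (q - 1) = 2 * L powr (q - 1) * t powr (2 * q - 2)"
      using L t by (simp add: powr_mult)
    finally show ?thesis using True sum by simp
  next
    case False
    have "\<bar>spow q a - spow q (- b)\<bar> \<le> (q - 1) * (\<bar>a\<bar> + \<bar>b\<bar>) powr (q - 2) * \<bar>a + b\<bar>"
      using spow_lipschitz[of q a "- b"] False by simp
    also have "\<dots> \<le> (q - 1) * (2 * B * t) powr (q - 2) * (L * t\<^sup>2)"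
      using a b ab q False by (intro mult_mono mult_left_mono powr_mono2) auto
    also have "\<dots> = (q - 1) * (2 * B) powr (q - 2) * L * t powr q"
      using t by (simp add: powr_mult powr_diff power2_eq_square)
    finally show ?thesis using False sum by simp
  qed
qed

section \<open>Integrability of powers of the norm\<close>

lemma set_integrable_dominated_by_cballs:
  fixes f :: "'a::euclidean_space \<Rightarrow> real" and c r :: "nat \<Rightarrow> real"
  assumes f: "f \<in> borel_measurable lborel" and S: "S \<in> sets lborel"
    and nonneg: "\<And>y. y \<in> S \<Longrightarrow> 0 \<le> f y" and c: "\<And>j. 0 \<le> c j" and r: "\<And>j. 0 \<le> r j"
    and summable: "summable (\<lambda>j. c j * r j ^ DIM('a))"
    and bound: "\<And>y. y \<in> S \<Longrightarrow> \<exists>j. f y \<le> c j \<and> norm y \<le> r j"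
  shows "set_integrable lborel S f"
  unfolding set_integrable_def
proof (rule integrableI_bounded)
  show "(\<lambda>x. indicator S x *\<^sub>R f x) \<in> borel_measurable lborel"
    using f S by measurable
  define g where "g j y = ennreal (c j) * indicator (cball (0::'a) (r j)) y" for j y
  have "ennreal (norm (indicator S y *\<^sub>R f y)) \<le> (\<Sum>j. g j y)" for y
  proof (cases "y \<in> S")
    case True
    then obtain k where k: "f y \<le> c k" "norm y \<le> r k" using bound by blast
    then have "ennreal (norm (indicator S y *\<^sub>R f y)) \<le> g k y"
      using True nonneg by (simp add: g_def ennreal_leI)
    also have "\<dots> \<le> (\<Sum>j. g j y)"
      using sum_le_suminf[OF summableI, of "{k}" "\<lambda>j. g j y"] by simp
    finally show ?thesis .
  qed simp
  then have "(\<integral>\<^sup>+y. norm (indicator S y *\<^sub>R f y) \<partial>lborel) \<le> (\<integral>\<^sup>+y. (\<Sum>j. g j y) \<partial>lborel)"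
    by (intro nn_integral_mono) blast
  also have "\<dots> = (\<Sum>j. \<integral>\<^sup>+y. g j y \<partial>lborel)"
    unfolding g_def
    by (intro nn_integral_suminf borel_measurable_times_ennreal borel_measurable_indicator) auto
  also have "\<dots> = (\<Sum>j. ennreal (unit_ball_vol DIM('a) * (c j * r j ^ DIM('a))))"
    using c r by (simp add: g_def nn_integral_cmult_indicator emeasure_cball ennreal_mult' mult_ac)
  also have "\<dots> = ennreal (\<Sum>j. unit_ball_vol DIM('a) * (c j * r j ^ DIM('a)))"
    using summable c r by (intro suminf_ennreal2 summable_mult) auto
  also have "\<dots> < \<infinity>" by simp
  finally show "(\<integral>\<^sup>+y. norm (indicator S y *\<^sub>R f y) \<partial>lborel) < \<infinity>" .
qed

lemma ex_dyadic_bracket: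
  fixes x :: real
  assumes "1 \<le> x"
  shows "\<exists>k. 2 ^ k \<le> x \<and> x < 2 ^ Suc k"
proof -
  obtain j where "x < 2 ^ j" using real_arch_pow[of 2 x] by auto
  define m where "m = (LEAST j. x < 2 ^ j)"
  have m: "x < 2 ^ m" unfolding m_def by (rule LeastI) fact
  then obtain k where k: "m = Suc k" using assms by (cases m) auto
  then have "\<not> x < 2 ^ k" unfolding m_def using not_less_Least[of k "\<lambda>j. x < 2 ^ j"] by simp
  then show ?thesis using m k by (intro exI[of _ k]) auto
qed

lemma set_integrable_norm_powr_ball:
  fixes \<beta> R :: real
  assumes "0 < \<beta>" "0 < R"
  shows "set_integrable lborel (ball (0::'a::euclidean_space) R) (\<lambda>y. norm y powr (\<beta> - real DIM('a)))"
proof -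
  define e where "e = \<beta> - real DIM('a)"
  define r where "r j = R / 2 ^ j" for j :: nat
  define c where "c j = (r j / 2) powr e + r j powr e" for j
  have r_pos: "0 < r j" for j using assms by (simp add: r_def)
  have "c j * r j ^ DIM('a) = (2 powr (- e) + 1) * R powr \<beta> * (2 powr (- \<beta>)) ^ j" for j
  proof -
    have "c j * r j ^ DIM('a) = (2 powr (- e) + 1) * r j powr \<beta>"
      using r_pos[of j] by (simp add: c_def e_def powr_divide powr_realpow[symmetric] powr_add[symmetric]
          powr_minus_divide field_simps)
    also have "r j powr \<beta> = R powr \<beta> * (2 powr (- \<beta>)) ^ j"
      using assms by (simp add: r_def powr_divide powr_realpow[symmetric] powr_powr powr_minus_divide
          field_simps)
    finally show ?thesis by (simp add: mult.assoc)
  qed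
  moreover have "summable (\<lambda>j. (2 powr (- e) + 1) * R powr \<beta> * (2 powr (- \<beta>)) ^ j)"
    using assms by (intro summable_mult summable_geometric) (simp add: powr_minus_divide)
  ultimately have summable: "summable (\<lambda>j. c j * r j ^ DIM('a))" by simp
  show ?thesis
    unfolding e_def[symmetric]
  proof (rule set_integrable_dominated_by_cballs[OF _ _ _ _ _ summable])
    fix y :: 'a assume y: "y \<in> ball 0 R"
    show "\<exists>j. norm y powr e \<le> c j \<and> norm y \<le> r j"
    proof (cases "y = 0")
      case False
      then obtain k where k: "2 ^ k \<le> R / norm y" "R / norm y < 2 ^ Suc k"
        using ex_dyadic_bracket[of "R / norm y"] y by auto
      then have k': "r k / 2 < norm y" "norm y \<le> r k"
        using False by (simp_all add: r_def field_simps)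
      have "norm y powr e \<le> (r k / 2) powr e \<or> norm y powr e \<le> r k powr e"
        using k' r_pos[of k] by (cases "0 \<le> e") (auto intro: powr_mono2 powr_mono2')
      then have "norm y powr e \<le> c k"
        unfolding c_def by (elim disjE) (simp_all add: add_increasing add_increasing2)
      then show ?thesis using k' by auto
    qed (use r_pos[of 0] in \<open>auto simp: c_def intro!: exI[of _ 0]\<close>)
  qed (use r_pos in \<open>auto simp: c_def less_imp_le\<close>)
qed

lemma set_integrable_norm_powr_outside_ball:
  fixes \<gamma> R :: real
  assumes "0 < \<gamma>" "0 < R"
  shows "set_integrable lborel (- ball (0::'a::euclidean_space) R) (\<lambda>y. norm y powr (- real DIM('a) - \<gamma>))"
proof -
  define r where "r j = R * 2 ^ Suc j" for j :: nat
  define c where "c j = (R * 2 ^ j) powr (- real DIM('a) - \<gamma>)" for j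
  have "c j * r j ^ DIM('a) = 2 ^ DIM('a) * R powr (- \<gamma>) * (2 powr (- \<gamma>)) ^ j" for j
  proof -
    have "c j * r j ^ DIM('a) = 2 ^ DIM('a) * (R * 2 ^ j) powr (- \<gamma>)"
      using assms by (simp add: c_def r_def powr_realpow[symmetric] powr_add[symmetric] powr_mult
          power_mult_distrib mult_ac)
    also have "(R * 2 ^ j) powr (- \<gamma>) = R powr (- \<gamma>) * (2 powr (- \<gamma>)) ^ j"
      using assms by (simp add: powr_mult powr_realpow[symmetric] powr_powr mult.commute)
    finally show ?thesis by simp
  qed
  moreover have "summable (\<lambda>j. 2 ^ DIM('a) * R powr (- \<gamma>) * (2 powr (- \<gamma>)) ^ j)"
    using assms by (intro summable_mult summable_geometric) (simp add: powr_minus_divide)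
  ultimately have summable: "summable (\<lambda>j. c j * r j ^ DIM('a))" by simp
  show ?thesis
  proof (rule set_integrable_dominated_by_cballs[OF _ _ _ _ _ summable])
    fix y :: 'a assume y: "y \<in> - ball 0 R"
    then obtain k where "2 ^ k \<le> norm y / R" "norm y / R < 2 ^ Suc k"
      using ex_dyadic_bracket[of "norm y / R"] assms by auto
    then have k: "R * 2 ^ k \<le> norm y" "norm y < r k"
      using assms by (simp_all add: r_def field_simps)
    then have "norm y powr (- real DIM('a) - \<gamma>) \<le> c k"
      using assms unfolding c_def by (intro powr_mono2') auto
    then show "\<exists>j. norm y powr (- real DIM('a) - \<gamma>) \<le> c j \<and> norm y \<le> r j" using k by auto
  qed (use assms in \<open>auto simp: c_def r_def\<close>)
qed

lemma set_integrable_outside_ball_if_power_bounds: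
  fixes k :: "'a::euclidean_space \<Rightarrow> real"
  assumes k: "k \<in> borel_measurable borel" "\<And>y. 0 \<le> k y"
    and near: "\<And>y. y \<in> ball 0 R \<Longrightarrow> k y \<le> c * norm y powr (- a)" "0 \<le> c" "0 \<le> a"
    and far: "\<And>y. y \<notin> ball 0 R \<Longrightarrow> k y \<le> M * norm y powr (- real DIM('a) - \<gamma>)" "0 < \<gamma>"
    and "0 < R" "0 < e"
  shows "set_integrable lborel (- ball 0 e) k"
proof -
  define h where "h y = c * e powr (- a) * indicator (ball 0 R) y
    + M * (indicator (- ball 0 R) y *\<^sub>R norm y powr (- real DIM('a) - \<gamma>))" for y :: 'a
  have "integrable lborel (indicator (ball (0::'a) R) :: 'a \<Rightarrow> real)"
    using emeasure_lborel_ball_finite[of "0::'a" R] by (intro integrable_real_indicator) auto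
  moreover have "integrable lborel
      (\<lambda>y. indicator (- ball (0::'a) R) y *\<^sub>R norm y powr (- real DIM('a) - \<gamma>))"
    using set_integrable_norm_powr_outside_ball[OF far(2) \<open>0 < R\<close>] unfolding set_integrable_def .
  ultimately have "integrable lborel h"
    unfolding h_def by (intro Bochner_Integration.integrable_add integrable_mult_right)
  then have h: "set_integrable lborel (- ball 0 e) h"
    unfolding set_integrable_def by (intro integrable_mult_indicator) auto
  have k_le_h: "k y \<le> h y" if "y \<notin> ball 0 e" for y
  proof (cases "y \<in> ball 0 R")
    case True
    have "k y \<le> c * norm y powr (- a)" using near(1)[OF True] .
    also have "\<dots> \<le> c * e powr (- a)"
      using that \<open>0 < e\<close> near(2,3) by (intro mult_left_mono powr_mono2') auto
    finally show ?thesis using True by (simp add: h_def)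
  qed (use far(1) in \<open>simp add: h_def\<close>)
  show ?thesis
  proof (rule set_integrable_bound[OF h])
    show "AE y in lborel. y \<in> - ball 0 e \<longrightarrow> norm (k y) \<le> norm (h y)"
      using k(2) k_le_h
      by (intro AE_I2) (metis ComplD abs_of_nonneg abs_ge_self order_trans real_norm_def)
  qed (use k(1) in \<open>simp add: set_borel_measurable_def\<close>)
qed

lemma integrable_incseq_limit_le:
  fixes f :: "nat \<Rightarrow> 'a \<Rightarrow> real"
  assumes f: "\<And>i. integrable M (f i)" and mono: "\<And>x. incseq (\<lambda>i. f i x)"
    and lim: "\<And>x. (\<lambda>i. f i x) \<longlonglongrightarrow> g x" and le: "\<And>i. integral\<^sup>L M (f i) \<le> C"
    and g: "g \<in> borel_measurable M"
  shows "integrable M g" "integral\<^sup>L M g \<le> C"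
proof -
  have "incseq (\<lambda>i. integral\<^sup>L M (f i))"
    using f mono by (auto simp: incseq_def intro!: integral_mono)
  moreover have "bdd_above (range (\<lambda>i. integral\<^sup>L M (f i)))"
    using le by (intro bdd_aboveI[of _ C]) auto
  ultimately have lim_int: "(\<lambda>i. integral\<^sup>L M (f i)) \<longlonglongrightarrow> (SUP i. integral\<^sup>L M (f i))"
    by (rule LIMSEQ_incseq_SUP[rotated])
  show "integrable M g"
    using integrable_monotone_convergence[OF f _ _ lim_int g] mono lim by (simp add: incseq_def mono_def)
  have "integral\<^sup>L M g = (SUP i. integral\<^sup>L M (f i))"
    using integral_monotone_convergence[OF f _ _ lim_int g] mono lim by (simp add: incseq_def mono_def)
  also have "\<dots> \<le> C" using le by (rule cSUP_least[rotated]) simp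
  finally show "integral\<^sup>L M g \<le> C" .
qed

section \<open>Second differences of \<open>C\<^sup>2\<close> functions\<close>

lemma C2_on_subset: "T \<subseteq> S \<Longrightarrow> C2_on S \<phi> \<Longrightarrow> C2_on T \<phi>"
  unfolding C2_on_def by (meson continuous_on_subset subsetD)

lemma C2_on_imp_continuous_on: "C2_on S \<phi> \<Longrightarrow> continuous_on S \<phi>"
  unfolding C2_on_def by (metis continuous_at_imp_continuous_on has_derivative_continuous)

lemma C2_on_cball_bounds:
  fixes \<phi> :: "'a::euclidean_space \<Rightarrow> real"
  assumes "C2_on (ball x0 r) \<phi>" "0 \<le> R" "R < r"
  obtains D B L where "\<forall>x\<in>cball x0 R. (\<phi> has_derivative blinfun_apply (D x)) (at x)"
    "0 \<le> B" "\<forall>x\<in>cball x0 R. \<forall>z\<in>cball x0 R. \<bar>\<phi> x - \<phi> z\<bar> \<le> B * norm (x - z)"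
    "0 \<le> L" "\<forall>x\<in>cball x0 R. \<forall>z\<in>cball x0 R. norm (D x - D z) \<le> L * norm (x - z)"
proof -
  obtain D D2 where D: "\<forall>x\<in>ball x0 r. (\<phi> has_derivative blinfun_apply (D x)) (at x)"
    and D2: "\<forall>x\<in>ball x0 r. (D has_derivative blinfun_apply (D2 x)) (at x)"
    and D2_cont: "continuous_on (ball x0 r) D2"
    using assms(1) unfolding C2_on_def by blast
  have sub: "cball x0 R \<subseteq> ball x0 r" using assms by auto
  have x0: "x0 \<in> cball x0 R" using assms by simp
  have "compact (D2 ` cball x0 R)"
    by (intro compact_continuous_image continuous_on_subset[OF D2_cont sub]) simp
  then obtain L where L: "\<forall>x\<in>cball x0 R. norm (D2 x) \<le> L"
    using compact_imp_bounded[of "D2 ` cball x0 R"] by (auto simp: bounded_iff)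
  have L_nonneg: "0 \<le> L" using L x0 norm_ge_zero order_trans by blast
  have lip: "norm (D x - D z) \<le> L * norm (x - z)" if "x \<in> cball x0 R" "z \<in> cball x0 R" for x z
  proof (rule differentiable_bound[of "cball x0 R" D "\<lambda>x. blinfun_apply (D2 x)" L])
    show "(D has_derivative blinfun_apply (D2 x)) (at x within cball x0 R)" if "x \<in> cball x0 R" for x
      using D2 sub that by (blast intro: has_derivative_at_withinI)
  qed (use L that in \<open>auto simp: norm_blinfun.rep_eq[symmetric]\<close>)
  define B where "B = norm (D x0) + L * R"
  have D_bound: "norm (D x) \<le> B" if "x \<in> cball x0 R" for x
  proof -
    have "norm (D x) \<le> norm (D x0) + norm (D x - D x0)" by (rule norm_triangle_sub)
    also have "\<dots> \<le> norm (D x0) + L * norm (x - x0)" using lip[OF that x0] by simp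
    also have "L * norm (x - x0) \<le> L * R"
      using that L_nonneg by (intro mult_left_mono) (auto simp: dist_norm norm_minus_commute)
    finally show ?thesis by (simp add: B_def)
  qed
  have \<phi>_lip: "norm (\<phi> x - \<phi> z) \<le> B * norm (x - z)" if "x \<in> cball x0 R" "z \<in> cball x0 R" for x z
  proof (rule differentiable_bound[of "cball x0 R" \<phi> "\<lambda>x. blinfun_apply (D x)" B])
    show "(\<phi> has_derivative blinfun_apply (D x)) (at x within cball x0 R)" if "x \<in> cball x0 R" for x
      using D sub that by (blast intro: has_derivative_at_withinI)
  qed (use that D_bound in \<open>auto simp: norm_blinfun.rep_eq[symmetric]\<close>)
  have "0 \<le> B" using L_nonneg assms by (simp add: B_def)
  then show ?thesis
    by (intro that[of D B L]) (use D sub L_nonneg lip \<phi>_lip in auto)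
qed

lemma has_real_derivative_along_line:
  fixes \<phi> :: "'a::real_normed_vector \<Rightarrow> real"
  assumes "(\<phi> has_derivative blinfun_apply D) (at (x0 + t *\<^sub>R y))"
  shows "((\<lambda>t. \<phi> (x0 + t *\<^sub>R y)) has_real_derivative blinfun_apply D y) (at t)"
proof -
  have "((\<lambda>t. x0 + t *\<^sub>R y) has_derivative (\<lambda>h. h *\<^sub>R y)) (at t)"
    by (auto intro!: derivative_eq_intros)
  from has_derivative_compose[OF this assms] show ?thesis
    by (simp add: o_def has_field_derivative_def blinfun.scaleR_right mult_commute_abs)
qed

lemma second_difference_le:
  fixes \<phi> :: "'a::real_normed_vector \<Rightarrow> real"
  assumes D: "\<forall>x\<in>cball x0 R. (\<phi> has_derivative blinfun_apply (D x)) (at x)"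
    and lip: "\<forall>x\<in>cball x0 R. \<forall>z\<in>cball x0 R. norm (D x - D z) \<le> L * norm (x - z)"
    and L: "0 \<le> L" and y: "norm y \<le> R"
  shows "\<bar>\<phi> (x0 + y) + \<phi> (x0 - y) - 2 * \<phi> x0\<bar> \<le> 2 * L * (norm y)\<^sup>2"
proof -
  define g where "g t = \<phi> (x0 + t *\<^sub>R y) + \<phi> (x0 + t *\<^sub>R (- y))" for t
  have on_segment: "x0 + t *\<^sub>R y \<in> cball x0 R" "x0 + t *\<^sub>R (- y) \<in> cball x0 R"
    if "0 \<le> t" "t \<le> 1" for t
    using that y mult_left_le_one_le[of "norm y" t] by (auto simp: dist_norm)
  have "(g has_real_derivative (D (x0 + t *\<^sub>R y) y + D (x0 + t *\<^sub>R (- y)) (- y))) (at t)"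
    if "0 \<le> t" "t \<le> 1" for t
    unfolding g_def using on_segment[OF that] D by (intro DERIV_add has_real_derivative_along_line) auto
  from MVT2[OF zero_less_one this] obtain \<xi> where \<xi>: "0 < \<xi>" "\<xi> < 1"
    "g 1 - g 0 = (1 - 0) * (D (x0 + \<xi> *\<^sub>R y) y + D (x0 + \<xi> *\<^sub>R (- y)) (- y))"
    by auto
  have "\<bar>g 1 - g 0\<bar> = \<bar>(D (x0 + \<xi> *\<^sub>R y) - D (x0 + \<xi> *\<^sub>R (- y))) y\<bar>"
    using \<xi> by (simp add: blinfun.diff_left blinfun.minus_right)
  also have "\<dots> \<le> norm (D (x0 + \<xi> *\<^sub>R y) - D (x0 + \<xi> *\<^sub>R (- y))) * norm y"
    using norm_blinfun by (metis real_norm_def)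
  also have "\<dots> \<le> L * norm ((x0 + \<xi> *\<^sub>R y) - (x0 + \<xi> *\<^sub>R (- y))) * norm y"
    by (intro mult_right_mono lip[rule_format] on_segment) (use \<xi> in auto)
  also have "norm ((x0 + \<xi> *\<^sub>R y) - (x0 + \<xi> *\<^sub>R (- y))) = 2 * \<xi> * norm y"
    using \<xi> by (simp add: scaleR_2[symmetric] scaleR_right_diff_distrib[symmetric])
  also have "L * (2 * \<xi> * norm y) * norm y \<le> 2 * L * (norm y)\<^sup>2"
    using \<xi> L mult_left_le_one_le[of "2 * L * (norm y)\<^sup>2" \<xi>] by (simp add: power2_eq_square mult_ac)
  finally show ?thesis by (simp add: g_def)
qed

lemma delta_C2_bound:
  fixes \<phi> :: "'a::euclidean_space \<Rightarrow> real"
  assumes "C2_on (ball x0 r) \<phi>" "0 < r" "1 < p x0"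
  obtains \<rho> A where "0 < \<rho>" "0 \<le> A"
    "\<And>y. norm y < \<rho> \<Longrightarrow> \<bar>delta p \<phi> x0 y\<bar> \<le> A * norm y powr (if p x0 \<le> 2 then 2 * p x0 - 2 else p x0)"
proof -
  obtain D B L where D: "\<forall>x\<in>cball x0 (r / 2). (\<phi> has_derivative blinfun_apply (D x)) (at x)"
    and B: "0 \<le> B" "\<forall>x\<in>cball x0 (r / 2). \<forall>z\<in>cball x0 (r / 2). \<bar>\<phi> x - \<phi> z\<bar> \<le> B * norm (x - z)"
    and L: "0 \<le> L" "\<forall>x\<in>cball x0 (r / 2). \<forall>z\<in>cball x0 (r / 2). norm (D x - D z) \<le> L * norm (x - z)"
    using C2_on_cball_bounds[OF assms(1), of "r / 2"] assms(2) by auto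
  define q where "q = p x0"
  define A where
    "A = (if q \<le> 2 then 2 * (2 * L) powr (q - 1) else (q - 1) * (2 * B) powr (q - 2) * (2 * L)) / 2"
  have "0 \<le> A" using B(1) L(1) assms(3) by (simp add: A_def q_def)
  moreover have "\<bar>delta p \<phi> x0 y\<bar> \<le> A * norm y powr (if q \<le> 2 then 2 * q - 2 else q)"
    if y: "norm y < r / 2" for y
  proof (cases "y = 0")
    case False
    have "\<bar>\<phi> x0 - \<phi> (x0 + z)\<bar> \<le> B * norm z" if "norm z < r / 2" for z
      using B(2)[rule_format, of x0 "x0 + z"] that assms(2) by (simp add: dist_norm)
    from this[of y] this[of "- y"]
    have "\<bar>spow q (\<phi> x0 - \<phi> (x0 + y)) + spow q (\<phi> x0 - \<phi> (x0 - y))\<bar> \<le>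
        2 * A * norm y powr (if q \<le> 2 then 2 * q - 2 else q)"
      using spow_sum_bound[of q B "2 * L" "norm y"] second_difference_le[OF D L(2,1), of y]
        assms(3) B(1) L(1) y False
      by (simp add: A_def q_def algebra_simps)
    then show ?thesis by (simp add: delta_def q_def)
  qed (simp add: delta_def)
  ultimately show ?thesis using that[of "r / 2" A] assms(2) unfolding q_def by auto
qed

section \<open>Symmetrisation and principal values\<close>

lemma delta_zero [simp]: "delta p v x 0 = 0"
  by (simp add: delta_def)

lemma borel_measurable_delta_kernel [measurable]:
  assumes [measurable]: "v \<in> borel_measurable borel" "K x \<in> borel_measurable borel"
  shows "(\<lambda>y. delta p v x y * K x y) \<in> borel_measurable borel"
  unfolding delta_def by measurable

lemma borel_measurable_Lintegrand [measurable]: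
  assumes [measurable]: "v \<in> borel_measurable borel" "K x \<in> borel_measurable borel"
  shows "Lintegrand p K v x \<in> borel_measurable borel"
  unfolding Lintegrand_def[abs_def] by measurable

lemma delta_glue:
  assumes "\<phi> x0 = u x0"
  shows "delta p (\<lambda>z. if z \<in> ball x0 \<rho> then \<phi> z else u z) x0 y =
    (if norm y < \<rho> then delta p \<phi> x0 y else delta p u x0 y)"
  using assms by (cases "0 < \<rho>") (auto simp: delta_def dist_norm)

lemma delta_antimono:
  assumes "v x = w x" "v (x + y) \<le> w (x + y)" "v (x - y) \<le> w (x - y)" "1 \<le> p x"
  shows "delta p w x y \<le> delta p v x y"
  using assms spow_mono[of "w x - w (x + y)" "v x - v (x + y)" "p x"]
    spow_mono[of "w x - w (x - y)" "v x - v (x - y)" "p x"]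
  by (simp add: delta_def)

lemma lborel_distr_uminus_euclidean: "distr lborel borel uminus = (lborel :: 'a::euclidean_space measure)"
  using lborel_affine[of "-1" "0::'a"] by (simp add: density_1)

lemma integrable_reflect:
  fixes F :: "'a::euclidean_space \<Rightarrow> real"
  assumes "integrable lborel F"
  shows "integrable lborel (\<lambda>y. F (- y))" "(\<integral>y. F (- y) \<partial>lborel) = integral\<^sup>L lborel F"
proof -
  have F: "F \<in> borel_measurable borel" using assms by auto
  have u: "uminus \<in> measurable lborel (borel :: 'a measure)" by simp
  show "integrable lborel (\<lambda>y. F (- y))"
    using integrable_distr_eq[OF u F] assms by (simp add: lborel_distr_uminus_euclidean)
  show "(\<integral>y. F (- y) \<partial>lborel) = integral\<^sup>L lborel F"
    using integral_distr[OF u F] by (simp add: lborel_distr_uminus_euclidean)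
qed

lemma set_integral_delta_kernel:
  fixes v :: "'a::euclidean_space \<Rightarrow> real"
  assumes int: "set_integrable lborel (- ball 0 e) (Lintegrand p K v x)"
    and sym: "\<And>y. K x (- y) = K x y"
  shows "set_integrable lborel (- ball 0 e) (\<lambda>y. delta p v x y * K x y)"
    "(LINT y:- ball 0 e|lborel. delta p v x y * K x y) = (LINT y:- ball 0 e|lborel. Lintegrand p K v x y)"
proof -
  define F where "F y = indicator (- ball 0 e) y * Lintegrand p K v x y" for y
  have F: "integrable lborel F" using int unfolding set_integrable_def F_def by simp
  have "indicator (- ball 0 e) y * (delta p v x y * K x y) = F y / 2 + F (- y) / 2" for y
    unfolding F_def Lintegrand_def delta_def using sym[of y]
    by (simp add: indicator_def algebra_simps)
  then have eq: "(\<lambda>y. indicator (- ball 0 e) y *\<^sub>R (delta p v x y * K x y)) =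
      (\<lambda>y. F y / 2 + F (- y) / 2)"
    by auto
  show "set_integrable lborel (- ball 0 e) (\<lambda>y. delta p v x y * K x y)"
    unfolding set_integrable_def eq using F integrable_reflect(1)[OF F] by simp
  show "(LINT y:- ball 0 e|lborel. delta p v x y * K x y) =
      (LINT y:- ball 0 e|lborel. Lintegrand p K v x y)"
  proof -
    have "(\<integral>y. F y / 2 + F (- y) / 2 \<partial>lborel) = integral\<^sup>L lborel F"
      using F integrable_reflect[OF F] by simp
    moreover have "(LINT y:- ball 0 e|lborel. Lintegrand p K v x y) = integral\<^sup>L lborel F"
      by (simp add: set_lebesgue_integral_def F_def[abs_def])
    ultimately show ?thesis unfolding set_lebesgue_integral_def eq by simp
  qed
qed

lemma tendsto_set_integral_outside_ball:
  fixes F :: "'a::euclidean_space \<Rightarrow> real"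
  assumes F: "integrable lborel F"
  shows "((\<lambda>\<epsilon>. LINT y:- ball 0 \<epsilon>|lborel. F y) \<longlongrightarrow> integral\<^sup>L lborel F) (at_right 0)"
proof -
  have "((\<lambda>t. LINT y:- ball 0 (inverse t)|lborel. F y) \<longlongrightarrow> integral\<^sup>L lborel F) at_top"
    unfolding set_lebesgue_integral_def
  proof (rule integral_dominated_convergence_at_top[where w = "\<lambda>y. norm (F y)"])
    show "AE y in lborel. ((\<lambda>t. indicator (- ball 0 (inverse t)) y *\<^sub>R F y) \<longlongrightarrow> F y) at_top"
      using AE_lborel_singleton[of 0]
    proof (rule AE_mp, intro AE_I2 impI)
      fix y :: 'a assume "y \<noteq> 0"
      have "\<forall>\<^sub>F t in at_top. inverse t < norm y"
        using eventually_gt_at_top[of "inverse (norm y)"]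
        by (rule eventually_mono) (use \<open>y \<noteq> 0\<close> less_imp_inverse_less[of "inverse (norm y)"] in auto)
      then show "((\<lambda>t. indicator (- ball 0 (inverse t)) y *\<^sub>R F y) \<longlongrightarrow> F y) at_top"
        by (rule tendsto_eventually[OF eventually_mono]) simp
    qed
  qed (use F in \<open>auto simp: indicator_def\<close>)
  then show ?thesis
    unfolding at_right_to_top filterlim_filtermap by simp
qed

lemma PV_has_value_iff_integral:
  fixes v :: "'a::euclidean_space \<Rightarrow> real"
  assumes sym: "\<And>y. K x (- y) = K x y" and int: "integrable lborel (\<lambda>y. delta p v x y * K x y)"
  shows "PV_has_value p K v x l \<longleftrightarrow>
    (\<forall>\<^sub>F \<rho> in at_right 0. set_integrable lborel (- ball 0 \<rho>) (Lintegrand p K v x)) \<and>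
    l = (\<integral>y. delta p v x y * K x y \<partial>lborel)"
proof -
  have "((\<lambda>\<rho>. LINT y:- ball 0 \<rho>|lborel. Lintegrand p K v x y) \<longlongrightarrow> l) (at_right 0) \<longleftrightarrow>
      l = (\<integral>y. delta p v x y * K x y \<partial>lborel)"
    if "\<forall>\<^sub>F \<rho> in at_right 0. set_integrable lborel (- ball 0 \<rho>) (Lintegrand p K v x)"
  proof -
    have "\<forall>\<^sub>F \<rho> in at_right 0. (LINT y:- ball 0 \<rho>|lborel. delta p v x y * K x y) =
        (LINT y:- ball 0 \<rho>|lborel. Lintegrand p K v x y)"
      using that by (rule eventually_mono) (intro set_integral_delta_kernel(2) sym)
    from tendsto_cong[OF this] tendsto_set_integral_outside_ball[OF int]
    have "((\<lambda>\<rho>. LINT y:- ball 0 \<rho>|lborel. Lintegrand p K v x y) \<longlongrightarrow>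
        (\<integral>y. delta p v x y * K x y \<partial>lborel)) (at_right 0)"
      by simp
    then show ?thesis using tendsto_unique[of "at_right (0::real)"] by auto
  qed
  then show ?thesis unfolding PV_has_value_def by blast
qed

lemma set_integrable_bounded_kernel:
  fixes u :: "'a::euclidean_space \<Rightarrow> real"
  assumes u: "u \<in> borel_measurable borel" "\<And>z. \<bar>u z\<bar> \<le> N" and p: "1 \<le> p x"
    and K: "K x \<in> borel_measurable borel" "\<And>y. 0 \<le> K x y" "set_integrable lborel S (K x)"
    and S: "S \<in> sets lborel"
  shows "set_integrable lborel S (Lintegrand p K u x)"
    "set_integrable lborel S (\<lambda>y. delta p u x y * K x y)"
proof -
  define W where "W = (2 * N) powr (p x - 1)"
  have spow_le: "\<bar>spow (p x) (u x - u z)\<bar> \<le> W" for z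
    unfolding W_def using u(2) p by (intro abs_spow_diff_le)
  have W_nonneg: "0 \<le> W" by (simp add: W_def)
  have W_int: "set_integrable lborel S (\<lambda>y. W * K x y)"
    using K(3) by simp
  show "set_integrable lborel S (Lintegrand p K u x)"
  proof (rule set_integrable_bound[OF W_int])
    show "AE y in lborel. y \<in> S \<longrightarrow> norm (Lintegrand p K u x y) \<le> norm (W * K x y)"
      using spow_le K(2) W_nonneg by (intro AE_I2) (simp add: Lintegrand_def abs_mult mult_right_mono)
  qed (use u K S in \<open>simp add: set_borel_measurable_def\<close>)
  show "set_integrable lborel S (\<lambda>y. delta p u x y * K x y)"
  proof (rule set_integrable_bound[OF W_int])
    have "\<bar>delta p u x y\<bar> \<le> W" for y
      using spow_le[of "x + y"] spow_le[of "x - y"] unfolding delta_def by linarith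
    then show "AE y in lborel. y \<in> S \<longrightarrow> norm (delta p u x y * K x y) \<le> norm (W * K x y)"
      using K(2) W_nonneg by (intro AE_I2) (simp add: abs_mult mult_right_mono)
  qed (use u K S in \<open>simp add: set_borel_measurable_def\<close>)
qed

lemma set_borel_measurable_delta_kernel_C2:
  fixes \<phi> :: "'a::euclidean_space \<Rightarrow> real"
  assumes "C2_on (ball x0 r) \<phi>" "0 < r" "\<rho> \<le> r" "K x0 \<in> borel_measurable borel"
  shows "set_borel_measurable lborel (ball 0 \<rho>) (\<lambda>y. delta p \<phi> x0 y * K x0 y)"
proof -
  (* \<open>\<phi>\<close> need not be measurable outside \<open>ball x0 r\<close>, so pass to a Borel truncation *)
  define \<phi>' where "\<phi>' z = indicator (ball x0 r) z *\<^sub>R \<phi> z" for z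
  have "\<phi>' \<in> borel_measurable borel"
    unfolding \<phi>'_def using C2_on_imp_continuous_on[OF assms(1)]
    by (intro borel_measurable_continuous_on_indicator) auto
  then have "(\<lambda>y. delta p \<phi>' x0 y * K x0 y) \<in> borel_measurable borel"
    using assms(4) by (rule borel_measurable_delta_kernel)
  then have "(\<lambda>y. indicator (ball 0 \<rho>) y *\<^sub>R (delta p \<phi>' x0 y * K x0 y)) \<in> borel_measurable lborel"
    by (intro borel_measurable_scaleR borel_measurable_indicator) auto
  moreover have "(\<lambda>y. indicator (ball 0 \<rho>) y *\<^sub>R (delta p \<phi>' x0 y * K x0 y)) =
      (\<lambda>y. indicator (ball 0 \<rho>) y *\<^sub>R (delta p \<phi> x0 y * K x0 y))"
    using assms(2,3) by (auto simp: indicator_def delta_def \<phi>'_def dist_norm)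
  ultimately show ?thesis
    unfolding set_borel_measurable_def by simp
qed

lemma set_integrable_delta_kernel_near_C2:
  fixes \<phi> :: "'a::euclidean_space \<Rightarrow> real"
  assumes \<phi>: "C2_on (ball x0 r) \<phi>" "0 < r" "1 < p x0"
    and K: "K x0 \<in> borel_measurable borel" "\<And>y. 0 \<le> K x0 y"
      "\<And>y. y \<in> ball 0 R \<Longrightarrow> K x0 y \<le> c * norm y powr (- real DIM('a) - \<alpha>)" "0 < R"
    and order: "\<alpha> < (if p x0 \<le> 2 then 2 * p x0 - 2 else p x0)"
  obtains \<rho> where "0 < \<rho>" "set_integrable lborel (ball 0 \<rho>) (\<lambda>y. delta p \<phi> x0 y * K x0 y)"
proof -
  let ?\<theta> = "if p x0 \<le> 2 then 2 * p x0 - 2 else p x0"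
  obtain \<rho>0 A where \<rho>0: "0 < \<rho>0" and A: "0 \<le> A"
    and bound: "\<And>y. norm y < \<rho>0 \<Longrightarrow> \<bar>delta p \<phi> x0 y\<bar> \<le> A * norm y powr ?\<theta>"
    using delta_C2_bound[of x0 r \<phi> p] \<phi> by blast
  define \<rho> where "\<rho> = min \<rho>0 (min r R)"
  have \<rho>: "0 < \<rho>" "\<rho> \<le> \<rho>0" "\<rho> \<le> r" "\<rho> \<le> R" using \<rho>0 \<phi>(2) K(4) by (auto simp: \<rho>_def)
  have "set_integrable lborel (ball (0::'a) \<rho>) (\<lambda>y. norm y powr ((?\<theta> - \<alpha>) - real DIM('a)))"
    by (rule set_integrable_norm_powr_ball) (use order \<rho>(1) in auto)
  then have majorant:
      "set_integrable lborel (ball (0::'a) \<rho>) (\<lambda>y. A * c * norm y powr ((?\<theta> - \<alpha>) - real DIM('a)))"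
    by (intro set_integrable_mult_right) assumption
  have "set_integrable lborel (ball 0 \<rho>) (\<lambda>y. delta p \<phi> x0 y * K x0 y)"
  proof (rule set_integrable_bound[OF majorant])
    show "set_borel_measurable lborel (ball 0 \<rho>) (\<lambda>y. delta p \<phi> x0 y * K x0 y)"
      using \<phi>(1,2) \<rho>(3) K(1) by (rule set_borel_measurable_delta_kernel_C2)
    show "AE y in lborel. y \<in> ball 0 \<rho> \<longrightarrow>
        norm (delta p \<phi> x0 y * K x0 y) \<le> norm (A * c * norm y powr ((?\<theta> - \<alpha>) - real DIM('a)))"
    proof (intro AE_I2 impI)
      fix y :: 'a assume y: "y \<in> ball 0 \<rho>"
      have "\<bar>delta p \<phi> x0 y\<bar> * K x0 y \<le> (A * norm y powr ?\<theta>) * (c * norm y powr (- real DIM('a) - \<alpha>))"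
        using bound[of y] K(2,3)[of y] y \<rho> A by (intro mult_mono) auto
      also have "\<dots> = A * c * (norm y powr ?\<theta> * norm y powr (- real DIM('a) - \<alpha>))"
        by (simp only: mult_ac)
      also have "norm y powr ?\<theta> * norm y powr (- real DIM('a) - \<alpha>) =
          norm y powr ((?\<theta> - \<alpha>) - real DIM('a))"
        unfolding powr_add[symmetric] by (rule arg_cong[of _ _ "(powr) (norm y)"]) simp
      finally have "\<bar>delta p \<phi> x0 y\<bar> * K x0 y \<le> A * c * norm y powr ((?\<theta> - \<alpha>) - real DIM('a))" .
      moreover have "norm (delta p \<phi> x0 y * K x0 y) = \<bar>delta p \<phi> x0 y\<bar> * K x0 y"
        using K(2)[of y] by (simp add: abs_mult)
      ultimately show
        "norm (delta p \<phi> x0 y * K x0 y) \<le> norm (A * c * norm y powr ((?\<theta> - \<alpha>) - real DIM('a)))"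
        by (metis abs_ge_self order_trans real_norm_def)
    qed
  qed
  with \<rho>(1) show ?thesis by (rule that)
qed

lemma delta_glue_antimono:
  assumes "\<phi> x0 = u x0" "\<rho>' \<le> \<rho>" "\<forall>x\<in>ball x0 \<rho>. u x \<le> \<phi> x" "1 \<le> p x0"
  shows "delta p (\<lambda>z. if z \<in> ball x0 \<rho> then \<phi> z else u z) x0 y \<le>
    delta p (\<lambda>z. if z \<in> ball x0 \<rho>' then \<phi> z else u z) x0 y"
proof -
  have "delta p \<phi> x0 y \<le> delta p u x0 y" if "norm y < \<rho>"
    using that assms(1,3,4) by (intro delta_antimono) (auto simp: dist_norm)
  then show ?thesis
    unfolding delta_glue[of \<phi> x0 u, OF assms(1)] using assms(2) by simp
qed

lemma integrable_delta_kernel_glue: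
  assumes "\<phi> x0 = u x0"
    and "set_integrable lborel (ball 0 \<rho>) (\<lambda>y. delta p \<phi> x0 y * K x0 y)"
    and "set_integrable lborel (- ball 0 \<rho>) (\<lambda>y. delta p u x0 y * K x0 y)"
  shows "integrable lborel (\<lambda>y. delta p (\<lambda>z. if z \<in> ball x0 \<rho> then \<phi> z else u z) x0 y * K x0 y)"
  using Bochner_Integration.integrable_add[OF assms(2,3)[unfolded set_integrable_def]]
  unfolding delta_glue[of \<phi> x0 u, OF assms(1)]
  by (rule back_subst[of "integrable lborel"]) (auto simp: indicator_def)

lemma visc_sub_test_integral_le:
  fixes u \<phi> :: "'a::euclidean_space \<Rightarrow> real"
  assumes visc: "visc_sub p K u C D"
    and test: "x0 \<in> D" "0 < \<rho>" "ball x0 \<rho> \<subseteq> D" "C2_on (ball x0 \<rho>) \<phi>" "\<phi> x0 = u x0"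
      "\<forall>x\<in>ball x0 \<rho>. u x \<le> \<phi> x"
    and sym: "\<And>y. K x0 (- y) = K x0 y"
    and int: "integrable lborel (\<lambda>y. delta p (\<lambda>z. if z \<in> ball x0 \<rho> then \<phi> z else u z) x0 y * K x0 y)"
  shows "(\<integral>y. delta p (\<lambda>z. if z \<in> ball x0 \<rho> then \<phi> z else u z) x0 y * K x0 y \<partial>lborel) \<le> C"
proof -
  obtain l where "l \<le> C" "PV_has_value p K (\<lambda>z. if z \<in> ball x0 \<rho> then \<phi> z else u z) x0 l"
    using visc test unfolding visc_sub_def by blast
  with PV_has_value_iff_integral[where p = p and K = K and x = x0, OF sym int] show ?thesis by simp
qed

lemma visc_sub_pointwise:
  fixes u \<phi> :: "'a::euclidean_space \<Rightarrow> real"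
  assumes visc: "visc_sub p K u C D"
    and x0: "x0 \<in> D" "0 < r" "ball x0 r \<subseteq> D"
    and \<phi>: "C2_on (ball x0 r) \<phi>" "\<phi> x0 = u x0" "\<forall>x\<in>ball x0 r. u x \<le> \<phi> x"
    and p: "1 \<le> p x0"
    and K: "K x0 \<in> borel_measurable borel" "\<And>y. 0 \<le> K x0 y" "\<And>y. K x0 (- y) = K x0 y"
      "\<And>e. 0 < e \<Longrightarrow> set_integrable lborel (- ball 0 e) (K x0)"
    and near: "0 < \<rho>0" "set_integrable lborel (ball 0 \<rho>0) (\<lambda>y. delta p \<phi> x0 y * K x0 y)"
  shows "integrable lborel (\<lambda>y. delta p u x0 y * K x0 y) \<and>
    PV_has_value p K u x0 (\<integral>y. delta p u x0 y * K x0 y \<partial>lborel) \<and>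
    (\<integral>y. delta p u x0 y * K x0 y \<partial>lborel) \<le> C"
proof -
  obtain N where N: "\<And>z. \<bar>u z\<bar> \<le> N" using visc unfolding visc_sub_def bounded_iff by auto
  have u: "u \<in> borel_measurable borel" using visc by (simp add: visc_sub_def)
  have outside: "set_integrable lborel (- ball 0 e) (Lintegrand p K u x0)"
    "set_integrable lborel (- ball 0 e) (\<lambda>y. delta p u x0 y * K x0 y)" if "0 < e" for e
    using set_integrable_bounded_kernel[where p = p and x = x0 and K = K, OF u N p K(1,2) K(4)[OF that]]
    by auto
  define \<rho>s where "\<rho>s j = min \<rho>0 r / Suc j" for j :: nat
  have \<rho>s: "0 < \<rho>s j" "\<rho>s j \<le> \<rho>0" "\<rho>s j \<le> r" for j
    using near(1) x0(2) divide_left_mono[of 1 "real (Suc j)" "min \<rho>0 r"] by (auto simp: \<rho>s_def)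
  define \<Phi> where "\<Phi> j y = delta p (\<lambda>z. if z \<in> ball x0 (\<rho>s j) then \<phi> z else u z) x0 y * K x0 y" for j y
  have \<Phi>_int: "integrable lborel (\<Phi> j)" for j
    unfolding \<Phi>_def using \<rho>s[of j]
    by (intro integrable_delta_kernel_glue \<phi>(2) outside(2) set_integrable_subset[OF near(2)]) auto
  have \<Phi>_le: "integral\<^sup>L lborel (\<Phi> j) \<le> C" for j
    using \<Phi>_int[of j] \<rho>s[of j] x0 \<phi> unfolding \<Phi>_def[abs_def]
    by (intro visc_sub_test_integral_le[OF visc] C2_on_subset[OF _ \<phi>(1)] K(3)) auto
  have mono: "incseq (\<lambda>j. \<Phi> j y)" for y
  proof (rule incseq_SucI)
    fix j
    have "\<rho>s (Suc j) \<le> \<rho>s j" "\<forall>x\<in>ball x0 (\<rho>s j). u x \<le> \<phi> x"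
      using \<rho>s[of j] \<phi>(3) near(1) x0(2) by (auto simp: \<rho>s_def frac_le)
    then show "\<Phi> j y \<le> \<Phi> (Suc j) y"
      unfolding \<Phi>_def using \<rho>s[of "Suc j"] \<phi>(2) p K(2)[of y]
      by (intro mult_right_mono delta_glue_antimono) auto
  qed
  have lim: "(\<lambda>j. \<Phi> j y) \<longlonglongrightarrow> delta p u x0 y * K x0 y" for y
  proof (cases "y = 0")
    case False
    have "\<rho>s \<longlonglongrightarrow> 0"
      unfolding \<rho>s_def by (rule LIMSEQ_Suc[OF lim_const_over_n])
    with False have "\<forall>\<^sub>F j in sequentially. \<rho>s j < norm y"
      by (intro order_tendstoD) auto
    then show ?thesis
      unfolding \<Phi>_def delta_glue[of \<phi> x0 u, OF \<phi>(2)]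
      by (rule tendsto_eventually[OF eventually_mono]) simp
  qed (simp add: \<Phi>_def)
  have "(\<lambda>y. delta p u x0 y * K x0 y) \<in> borel_measurable lborel"
    using u K(1) by simp
  note int = integrable_incseq_limit_le(1)[OF \<Phi>_int mono lim \<Phi>_le this]
    and le = integrable_incseq_limit_le(2)[OF \<Phi>_int mono lim \<Phi>_le this]
  have "PV_has_value p K u x0 (\<integral>y. delta p u x0 y * K x0 y \<partial>lborel)"
    unfolding PV_has_value_iff_integral[where p = p and K = K and x = x0, OF K(3) int]
    using outside(1) by (auto intro: eventually_at_rightI[of 0 1])
  with int le show ?thesis by blast
qed

lemma admissible_sp_at:
  assumes "admissible_sp s p" "x \<in> ball 0 2"
  shows "0 < s x" "s x < 1" "1 < p x" "p x < 2 \<Longrightarrow> 1 < p x * (1 - s x)"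
proof -
  have "0 < s x \<and> s x < 1 \<and> 1 < p x \<and> (p x < 2 \<longrightarrow> 1 < p x * (1 - s x))"
    using assms(1) unfolding admissible_sp_def
    by (elim disjE exE conjE)
      (use assms(2) in \<open>auto simp: divide_less_eq mult.commute dest!: bspec[where x = x]\<close>)
  then show "0 < s x" "s x < 1" "1 < p x" "p x < 2 \<Longrightarrow> 1 < p x * (1 - s x)" by auto
qed

lemma delta_order_gt:
  fixes \<sigma> q :: real
  assumes "\<sigma> < 1" "1 < q" "q < 2 \<Longrightarrow> 1 < q * (1 - \<sigma>)"
  shows "\<sigma> * q < (if q \<le> 2 then 2 * q - 2 else q)"
proof (cases "q < 2")
  case True
  then show ?thesis using assms by (simp add: algebra_simps)
next
  case False
  have "\<sigma> * q < 1 * q" using assms by (intro mult_strict_right_mono) auto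
  then show ?thesis using False by (cases "q = 2") simp_all
qed

lemma admissible_kernel_at:
  fixes K :: "'a::euclidean_space \<Rightarrow> 'a \<Rightarrow> real"
  assumes "admissible_kernel s p K lam Lam M \<gamma>" "x \<in> ball 0 2"
  shows "K x \<in> borel_measurable borel" "\<And>y. 0 \<le> K x y" "\<And>y. K x (- y) = K x y"
    "\<And>y. y \<in> ball 0 2 \<Longrightarrow> K x y \<le> Lam * norm y powr (- real DIM('a) - s x * p x)"
    "\<And>y. y \<notin> ball 0 (1 / 4) \<Longrightarrow> K x y \<le> M * norm y powr (- real DIM('a) - \<gamma>)"
    "0 < Lam" "0 < M" "0 < \<gamma>"
proof -
  let ?K = "\<lambda>z. if fst z \<in> ball 0 2 then K (fst z) (snd z) else 0"
  have "?K \<in> borel_measurable (lborel \<Otimes>\<^sub>M lborel)"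
    and "0 < lam" "lam \<le> Lam" "0 < M" "0 < \<gamma>"
    and "\<forall>x\<in>ball 0 2. \<forall>y. 0 \<le> K x y \<and> K x y = K x (- y)"
    and "\<forall>x\<in>ball 0 2. \<forall>y\<in>ball 0 2. lam * norm y powr (- real DIM('a) - s x * p x) \<le> K x y \<and>
        K x y \<le> Lam * norm y powr (- real DIM('a) - s x * p x)"
    and "\<forall>x\<in>ball 0 2. \<forall>y. y \<notin> ball 0 (1 / 4) \<longrightarrow> K x y \<le> M * norm y powr (- real DIM('a) - \<gamma>)"
    using assms(1) unfolding admissible_kernel_def by blast+
  moreover from measurable_Pair2[OF this(1), of x] have "K x \<in> borel_measurable borel"
    using assms(2) by simp
  ultimately show "K x \<in> borel_measurable borel" "\<And>y. 0 \<le> K x y" "\<And>y. K x (- y) = K x y"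
    "\<And>y. y \<in> ball 0 2 \<Longrightarrow> K x y \<le> Lam * norm y powr (- real DIM('a) - s x * p x)"
    "\<And>y. y \<notin> ball 0 (1 / 4) \<Longrightarrow> K x y \<le> M * norm y powr (- real DIM('a) - \<gamma>)"
    "0 < Lam" "0 < M" "0 < \<gamma>"
    using assms(2) by (metis, metis, metis, metis, metis, linarith, linarith, linarith)
qed

theorem proposition2p2:
  fixes s p :: "'a::euclidean_space \<Rightarrow> real" and K :: "'a \<Rightarrow> 'a \<Rightarrow> real"
    and u \<phi> :: "'a \<Rightarrow> real" and x0 :: 'a
    and lam Lam M \<gamma> C r :: real
  assumes "admissible_sp s p"
    and "admissible_kernel s p K lam Lam M \<gamma>"
    and "visc_sub p K u C (ball 0 1)"
    and "x0 \<in> ball 0 1" and "r > 0" and "ball x0 r \<subseteq> ball 0 1"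
    and "C2_on (ball x0 r) \<phi>" and "\<phi> x0 = u x0" and "\<forall>x\<in>ball x0 r. \<phi> x \<ge> u x"
  shows "integrable lborel (\<lambda>y. delta p u x0 y * K x0 y) \<and>
         PV_has_value p K u x0 (\<integral>y. delta p u x0 y * K x0 y \<partial>lborel) \<and>
         (\<integral>y. delta p u x0 y * K x0 y \<partial>lborel) \<le> C"
proof -
  have x0: "x0 \<in> ball 0 2" using assms(4) by simp
  note sp = admissible_sp_at[OF assms(1) x0] and K = admissible_kernel_at[OF assms(2) x0]
  have outside: "set_integrable lborel (- ball 0 e) (K x0)" if "0 < e" for e
    using sp K that
    by (intro set_integrable_outside_ball_if_power_bounds[where R = 2 and c = Lam
          and a = "DIM('a) + s x0 * p x0" and M = M and \<gamma> = \<gamma>]) (auto simp: algebra_simps)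
  obtain \<rho>0 where "0 < \<rho>0" "set_integrable lborel (ball 0 \<rho>0) (\<lambda>y. delta p \<phi> x0 y * K x0 y)"
    using set_integrable_delta_kernel_near_C2[where p = p and K = K and R = 2 and \<alpha> = "s x0 * p x0",
        OF assms(7,5) sp(3) K(1,2,4)]
      delta_order_gt[OF sp(2,3,4)] by auto
  then show ?thesis
    using visc_sub_pointwise[OF assms(3,4,5,6,7,8)] assms(9) sp(3) K(1,2,3) outside by auto
qed

end
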